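(* For every $p\ge2$ and every integer $1\le i\le N-1$, the dimensions of consecutive models of $\mathcal M_1$ satisfy $d_{m_{i+1}}\le 2\,d_{m_i}$.
   Context: Let $p\ge 2$ be an integer. $\Lambda=\{0,\dots,p-1\}^2$ is the $p\times p$ discrete torus; indices of $p\times p$ arrays are taken modulo $p$. $\Theta$ is the vector space of real $p\times p$ arrays $\theta$ indexed by $\Lambda$ with $\theta[0,0]=0$ and $\theta[i,j]=\theta[-i,-j]$ for all $(i,j)$. Toroidal norm: $|(i,j)|_t^2=(i\wedge(p-i))^2+(j\wedge(p-j))^2$ for $(i,j)\in\Lambda$. For $r\ge0$, $m(r)=\{(i,j)\in\Lambda\setminus\{(0,0)\}:|(i,j)|_t\le r\}$; $\mathcal M_1$ is the collection of the distinct sets $m(r)$, totally ordered by inclusion as $\emptyset=m_0\subsetneq m_1\subsetneq\dots\subsetneq m_N=\Lambda\setminus\{(0,0)\}$. For $m\in\mathcal M_1$, $\Theta_m=\{\theta\in\Theta:\theta[i,j]=0\ \forall(i,j)\notin m\}$ and $d_m=\dim\Theta_m$ (equivalently, the number of pairs $\{(i,j),(-i,-j)\}$ contained in $m$). *)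

theory Defs
  imports Complex_Main
begin

definition torus :: "nat \<Rightarrow> (nat \<times> nat) set" where
  "torus p = {0..<p} \<times> {0..<p}"

definition tneg :: "nat \<Rightarrow> nat \<times> nat \<Rightarrow> nat \<times> nat" where
  "tneg p x = ((p - fst x) mod p, (p - snd x) mod p)"

definition tnorm :: "nat \<Rightarrow> nat \<times> nat \<Rightarrow> real" where
  "tnorm p x = sqrt (real (min (fst x) (p - fst x)) ^ 2 + real (min (snd x) (p - snd x)) ^ 2)"

definition mset_r :: "nat \<Rightarrow> real \<Rightarrow> (nat \<times> nat) set" where
  "mset_r p r = {x \<in> torus p. x \<noteq> (0, 0) \<and> tnorm p x \<le> r}"

definition M1 :: "nat \<Rightarrow> (nat \<times> nat) set set" where
  "M1 p = {mset_r p r | r. r \<ge> 0}"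

text \<open>N, where M_1 = {m_0 < m_1 < ... < m_N}.\<close>
definition NM :: "nat \<Rightarrow> nat" where
  "NM p = card (M1 p) - 1"

definition mi :: "nat \<Rightarrow> nat \<Rightarrow> (nat \<times> nat) set" where
  "mi p i = (THE m. m \<in> M1 p \<and> card {m' \<in> M1 p. m' \<subset> m} = i)"

text \<open>d_m = dim Theta_m = number of pairs {x, -x} contained in m.\<close>
definition dm :: "nat \<Rightarrow> (nat \<times> nat) set \<Rightarrow> nat" where
  "dm p m = card {{x, tneg p x} | x. x \<in> m \<and> tneg p x \<in> m}"

end

theory Submission
  imports Defs
begin

text \<open>
  The sets m(r) are the nonzero points of the torus whose squared toroidal
  norm is at most r^2, so M_1 is a finite chain and two consecutive members m_i and
  m_(i+1) differ by a sphere S: all points of S have the same squared norm, and every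
  nonzero point of smaller squared norm already lies in m_i.  Then
    d(m_(i+1)) <= d(m_i) + #orbits of S  and  #orbits of S <= #(S \<inter> H),
  where H is a half plane meeting every orbit {x, -x} and meeting it at most once.
  Finally a "descent" map, which moves a point of H one lattice step closer to the
  origin while staying in H, is injective on each sphere (it has an explicit left
  inverse once the squared norm is known) and sends S \<inter> H into m_i; distinct images
  in H lie in distinct orbits, so #(S \<inter> H) <= d(m_i).  Here i >= 1 makes m_i nonempty,
  which guarantees that S lies beyond the innermost sphere (squared norm >= 2).
\<close>

definition rank :: "'a set set \<Rightarrow> 'a set \<Rightarrow> nat" where
  "rank F A = card {B \<in> F. B \<subset> A}"

definition chain_elem :: "'a set set \<Rightarrow> nat \<Rightarrow> 'a set" where
  "chain_elem F i = (THE A. A \<in> F \<and> rank F A = i)"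

context
  fixes F :: "'a set set"
  assumes fin: "finite F"
    and chain: "\<And>A B. A \<in> F \<Longrightarrow> B \<in> F \<Longrightarrow> A \<subseteq> B \<or> B \<subseteq> A"
begin

lemma rank_strict_mono: "A \<in> F \<Longrightarrow> B \<in> F \<Longrightarrow> A \<subset> B \<Longrightarrow> rank F A < rank F B"
  unfolding rank_def using fin by (intro psubset_card_mono) auto

lemma rank_inj: "inj_on (rank F) F"
proof (rule inj_onI)
  fix A B assume "A \<in> F" "B \<in> F" "rank F A = rank F B"
  then show "A = B" using chain[of A B] rank_strict_mono[of A B] rank_strict_mono[of B A]
    by (metis less_irrefl psubsetI)
qed

lemma rank_image: "rank F ` F = {..<card F}"
proof (rule card_subset_eq)
  show "rank F ` F \<subseteq> {..<card F}"
    unfolding rank_def using fin by (auto intro!: psubset_card_mono)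
qed (simp_all add: card_image[OF rank_inj])

lemma chain_elem: assumes "i < card F"
  shows "chain_elem F i \<in> F" and "rank F (chain_elem F i) = i"
proof -
  obtain A where "A \<in> F" "rank F A = i" using assms rank_image by (metis imageE lessThan_iff)
  then have "\<exists>!A. A \<in> F \<and> rank F A = i" using rank_inj by (auto dest: inj_onD)
  then show "chain_elem F i \<in> F" "rank F (chain_elem F i) = i"
    unfolding chain_elem_def by (metis (mono_tags, lifting) theI')+
qed

lemma chain_elem_consecutive:
  assumes "i + 1 < card F"
  shows "chain_elem F i \<subset> chain_elem F (i + 1)"
    and "\<And>C. C \<in> F \<Longrightarrow> \<not> (chain_elem F i \<subset> C \<and> C \<subset> chain_elem F (i + 1))"
proof -
  let ?A = "chain_elem F i" and ?B = "chain_elem F (i + 1)"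
  have A: "?A \<in> F" "rank F ?A = i" and B: "?B \<in> F" "rank F ?B = i + 1"
    using chain_elem[of i] chain_elem[of "i + 1"] assms by auto
  show "?A \<subset> ?B"
    using chain[OF A(1) B(1)] rank_strict_mono[OF B(1) A(1)] A B by fastforce
  show "\<not> (?A \<subset> C \<and> C \<subset> ?B)" if "C \<in> F" for C
  proof
    assume "?A \<subset> C \<and> C \<subset> ?B"
    then have "i < rank F C" "rank F C < i + 1"
      using rank_strict_mono[OF A(1) that] rank_strict_mono[OF that B(1)] A B by auto
    then show False by simp
  qed
qed

text \<open>A member of positive rank has a strictly smaller member, hence is nonempty.\<close>
lemma chain_elem_nonempty: "0 < i \<Longrightarrow> i < card F \<Longrightarrow> chain_elem F i \<noteq> {}"
  using chain_elem[of i] by (auto simp: rank_def)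

end

text \<open>Squared toroidal norm as a natural number; comparisons of tnorm reduce to it.\<close>
definition sqnorm :: "nat \<Rightarrow> nat \<times> nat \<Rightarrow> nat" where
  "sqnorm p x = (min (fst x) (p - fst x))\<^sup>2 + (min (snd x) (p - snd x))\<^sup>2"

lemma finite_torus: "finite (torus p)"
  by (simp add: torus_def)

lemma tnorm_sqnorm: "tnorm p x = sqrt (real (sqnorm p x))"
  by (simp add: tnorm_def sqnorm_def)

lemma sqnorm_pos:
  assumes "x \<in> torus p" "x \<noteq> (0, 0)"
  shows "1 \<le> sqnorm p x"
proof -
  have "0 < min (fst x) (p - fst x) \<or> 0 < min (snd x) (p - snd x)"
    using assms by (cases x) (auto simp: torus_def)
  then show ?thesis
    unfolding sqnorm_def by (metis add_is_0 less_one not_less power_eq_0_iff zero_less_iff_neq_zero)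
qed

lemma tneg_torus: "0 < p \<Longrightarrow> tneg p x \<in> torus p"
  by (simp add: tneg_def torus_def)

lemma tneg_tneg: "x \<in> torus p \<Longrightarrow> tneg p (tneg p x) = x"
  by (cases x) (auto simp: tneg_def torus_def mod_if)

lemma tneg_zero_iff: "x \<in> torus p \<Longrightarrow> tneg p x = (0, 0) \<longleftrightarrow> x = (0, 0)"
  by (cases x) (auto simp: tneg_def torus_def mod_if)

lemma sqnorm_tneg: "x \<in> torus p \<Longrightarrow> sqnorm p (tneg p x) = sqnorm p x"
  by (cases x) (auto simp: tneg_def torus_def sqnorm_def mod_if min_def)

lemma M1_subset_torus: "A \<in> M1 p \<Longrightarrow> A \<subseteq> torus p"
  by (auto simp: M1_def mset_r_def)

lemma M1_nonzero: "A \<in> M1 p \<Longrightarrow> (0, 0) \<notin> A"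
  by (auto simp: M1_def mset_r_def)

lemma M1_symmetric: "A \<in> M1 p \<Longrightarrow> x \<in> A \<Longrightarrow> tneg p x \<in> A"
  unfolding M1_def mset_r_def
  using tneg_torus[of p x] sqnorm_tneg[of x p] tneg_zero_iff[of x p]
  by (auto simp: tnorm_sqnorm torus_def)

lemma M1_down_closed:
  assumes "A \<in> M1 p" "z \<in> A" "y \<in> torus p" "y \<noteq> (0, 0)" "sqnorm p y \<le> sqnorm p z"
  shows "y \<in> A"
proof -
  have "tnorm p y \<le> tnorm p z" using assms(5) by (simp add: tnorm_sqnorm)
  then show ?thesis using assms(1-4) by (auto simp: M1_def mset_r_def)
qed

lemma ball_in_M1: "mset_r p (tnorm p y) \<in> M1 p"
  by (auto simp: M1_def tnorm_def)

lemma M1_chain: "A \<in> M1 p \<Longrightarrow> B \<in> M1 p \<Longrightarrow> A \<subseteq> B \<or> B \<subseteq> A"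
  by (auto simp: M1_def mset_r_def)

lemma M1_finite: "finite (M1 p)"
  by (rule finite_subset[of _ "Pow (torus p)"]) (auto simp: M1_def mset_r_def finite_torus)

text \<open>Between consecutive members M and M' of M_1: every nonzero point of smaller norm than a
  point of M' - M already lies in M (otherwise the ball through it would sit strictly between).\<close>
lemma shell_below:
  assumes M: "M \<in> M1 p" and M': "M' \<in> M1 p"
    and between: "\<And>C. C \<in> M1 p \<Longrightarrow> \<not> (M \<subset> C \<and> C \<subset> M')"
    and x: "x \<in> M' - M" and y: "y \<in> torus p" "y \<noteq> (0, 0)" and less: "sqnorm p y < sqnorm p x"
  shows "y \<in> M"
proof (rule ccontr)
  assume yM: "y \<notin> M"
  define C where "C = mset_r p (tnorm p y)"
  have C: "C \<in> M1 p" by (simp add: C_def ball_in_M1)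
  have "y \<in> C" "x \<notin> C" using y less by (auto simp: C_def mset_r_def tnorm_sqnorm)
  then have "M \<subset> C" "C \<subset> M'" using M1_chain[OF M C] M1_chain[OF C M'] x yM by auto
  then show False using between[OF C] by blast
qed

text \<open>A half plane H of the torus: it contains at least one point of every orbit {x, -x} of a
  nonzero point, and two points of one orbit only when that orbit is a single fixed point.\<close>
definition half :: "nat \<Rightarrow> nat \<times> nat \<Rightarrow> bool" where
  "half p x = (case x of (a, b) \<Rightarrow>
     (0 < b \<and> 2 * b < p) \<or> (b = 0 \<and> 0 < a \<and> 2 * a \<le> p) \<or> (2 * b = p \<and> 2 * a \<le> p))"

lemma half_covers: "x \<in> torus p \<Longrightarrow> x \<noteq> (0, 0) \<Longrightarrow> half p x \<or> half p (tneg p x)"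
  by (cases x) (auto simp: torus_def half_def tneg_def mod_if)

lemma half_unique: "x \<in> torus p \<Longrightarrow> half p x \<Longrightarrow> half p (tneg p x) \<Longrightarrow> tneg p x = x"
  by (cases x) (auto simp: torus_def half_def tneg_def mod_if split: if_splits)

text \<open>The descent map on H: lower the second coordinate by one; from the row b = 1 move to the
  axis b = 0 (folding a > p/2 over, with one shift to avoid collisions); on the axis move
  one step towards the origin.  The map ascend recovers the point from its image and norm.\<close>
definition descend :: "nat \<Rightarrow> nat \<times> nat \<Rightarrow> nat \<times> nat" where
  "descend p x = (case x of (a, b) \<Rightarrow>
     if 2 \<le> b then (a, b - 1)
     else if b = 1 then
       (if 2 * a \<le> p then (a, 0) else if 2 \<le> p - a then (p - a - 1, 0) else (0, 1))
     else (a - 1, 0))"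

definition ascend :: "nat \<Rightarrow> nat \<Rightarrow> nat \<times> nat \<Rightarrow> nat \<times> nat" where
  "ascend p s y = (case y of (u, v) \<Rightarrow>
     if 1 \<le> v then (if s = 2 then (p - 1, 1) else (u, v + 1))
     else if u\<^sup>2 + 1 = s then (u, 1)
     else if (u + 1)\<^sup>2 + 1 = s then (p - u - 1, 1)
     else (u + 1, 0))"

lemma min_left: "2 * a \<le> (p::nat) \<Longrightarrow> min a (p - a) = a" by auto
lemma min_right: "p < 2 * (a::nat) \<Longrightarrow> min a (p - a) = p - a" by auto

lemma descend_cases:
  assumes p: "2 \<le> p" and x: "x \<in> torus p" and H: "half p x" and n: "2 \<le> sqnorm p x"
  obtains (vertical) a b
      where "x = (a, b)" "a < p" "2 \<le> b" "2 * b \<le> p" "descend p x = (a, b - 1)"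
  | (slant_left) a where "x = (a, 1)" "0 < a" "2 * a \<le> p" "descend p x = (a, 0)"
  | (slant_right) a
      where "x = (a, 1)" "p < 2 * a" "2 \<le> p - a" "a < p" "descend p x = (p - a - 1, 0)"
  | (corner) "x = (p - 1, 1)" "2 < p" "descend p x = (0, 1)"
  | (axis) a where "x = (a, 0)" "2 \<le> a" "2 * a \<le> p" "descend p x = (a - 1, 0)"
proof -
  obtain a b where ab: "x = (a, b)" "a < p" "b < p" using x by (auto simp: torus_def)
  consider "2 \<le> b" | "b = 1" | "b = 0" by linarith
  then show thesis
  proof cases
    case 1
    then show thesis using vertical H ab by (auto simp: half_def descend_def)
  next
    case 2
    show thesis
    proof (cases "2 * a \<le> p")
      case True
      have "a \<noteq> 0"
      proof
        assume "a = 0"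
        then show False using n ab 2 p by (simp add: sqnorm_def)
      qed
      then show thesis using slant_left True ab 2 by (simp add: descend_def)
    next
      case False
      then show thesis using slant_right corner H ab 2
        by (cases "2 \<le> p - a") (auto simp: half_def descend_def)
    qed
  next
    case 3
    then have "0 < a" "2 * a \<le> p" using H ab p by (auto simp: half_def)
    moreover have "a \<noteq> 1" using n ab 3 by (auto simp: sqnorm_def)
    ultimately show thesis using axis ab 3 by (simp add: descend_def)
  qed
qed

lemma descend_props:
  assumes p: "2 \<le> p" and x: "x \<in> torus p" and H: "half p x" and n: "2 \<le> sqnorm p x"
  shows "descend p x \<in> torus p \<and> descend p x \<noteq> (0, 0) \<and> half p (descend p x)
    \<and> sqnorm p (descend p x) < sqnorm p x"
  using assms
proof (cases rule: descend_cases)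
  case (vertical a b)
  have "(b - 1)\<^sup>2 < b\<^sup>2" using vertical by (simp add: power_strict_mono)
  then show ?thesis
    using vertical by (auto simp: torus_def half_def sqnorm_def min_left)
next
  case (slant_left a)
  then show ?thesis
    by (auto simp: torus_def half_def sqnorm_def min_left)
next
  case (slant_right a)
  have "(p - a - 1)\<^sup>2 < (p - a)\<^sup>2" using slant_right by (simp add: power_strict_mono)
  then show ?thesis
    using slant_right by (auto simp: torus_def half_def sqnorm_def min_left min_right)
next
  case corner
  then show ?thesis
    by (auto simp: torus_def half_def sqnorm_def min_def)
next
  case (axis a)
  have "(a - 1)\<^sup>2 < a\<^sup>2" using axis by (simp add: power_strict_mono)
  then show ?thesis
    using axis by (auto simp: torus_def half_def sqnorm_def min_left)
qed

lemma ascend_descend: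
  assumes "2 \<le> p" "x \<in> torus p" "half p x" "2 \<le> sqnorm p x"
  shows "ascend p (sqnorm p x) (descend p x) = x"
  using assms
proof (cases rule: descend_cases)
  case (vertical a b)
  have "4 \<le> b\<^sup>2" using power_mono[of 2 b 2] vertical by simp
  then have "sqnorm p x \<noteq> 2" using vertical by (simp add: sqnorm_def min_left)
  moreover have "b - 1 + 1 = b" using vertical by simp
  ultimately show ?thesis using vertical by (simp add: ascend_def)
next
  case (slant_left a)
  then show ?thesis by (simp add: ascend_def sqnorm_def min_left)
next
  case (slant_right a)
  have "(p - a - 1)\<^sup>2 \<noteq> (p - a)\<^sup>2" using slant_right by simp
  moreover have "p - a - 1 + 1 = p - a" using slant_right by simp
  ultimately show ?thesis using slant_right by (simp add: ascend_def sqnorm_def min_right)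
next
  case corner
  then have "sqnorm p x = 2" by (auto simp: sqnorm_def min_def)
  then show ?thesis using corner by (simp add: ascend_def)
next
  case (axis a)
  have "(a - 1)\<^sup>2 + 1 \<noteq> (a - 1 + 1)\<^sup>2" using axis by (cases a) (auto simp: power2_eq_square)
  moreover have "a - 1 + 1 = a" using axis by simp
  ultimately show ?thesis using axis by (simp add: ascend_def sqnorm_def min_left)
qed

lemma descend_inj_on_sphere:
  assumes p: "2 \<le> p" and x: "x \<in> torus p" "half p x" "2 \<le> sqnorm p x"
    and y: "y \<in> torus p" "half p y" and same: "sqnorm p y = sqnorm p x"
    and eq: "descend p x = descend p y"
  shows "x = y"
proof -
  have "x = ascend p (sqnorm p x) (descend p x)" using ascend_descend[OF p x] by simp
  also have "\<dots> = ascend p (sqnorm p y) (descend p y)" using same eq by simp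
  also have "\<dots> = y" using ascend_descend[OF p y] same x(3) by simp
  finally show ?thesis .
qed

definition orbits :: "nat \<Rightarrow> (nat \<times> nat) set \<Rightarrow> (nat \<times> nat) set set" where
  "orbits p m = {{x, tneg p x} | x. x \<in> m \<and> tneg p x \<in> m}"

lemma dm_orbits: "dm p m = card (orbits p m)"
  by (simp add: dm_def orbits_def)

lemma finite_orbits: "m \<subseteq> torus p \<Longrightarrow> finite (orbits p m)"
proof -
  assume "m \<subseteq> torus p"
  then have "finite m" using finite_torus by (rule finite_subset)
  moreover have "orbits p m \<subseteq> (\<lambda>x. {x, tneg p x}) ` m" by (auto simp: orbits_def)
  ultimately show ?thesis by (meson finite_imageI finite_subset)
qed

text \<open>For negation-invariant M inside M', an orbit of M' lies in M or in M' - M.\<close>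
lemma card_orbits_split:
  assumes sub: "M \<subseteq> M'" "M' \<subseteq> torus p" and sym: "\<And>x. x \<in> M \<Longrightarrow> tneg p x \<in> M"
  shows "card (orbits p M') \<le> card (orbits p M) + card (orbits p (M' - M))"
proof -
  have "orbits p M' \<subseteq> orbits p M \<union> orbits p (M' - M)"
  proof
    fix P assume "P \<in> orbits p M'"
    then obtain x where x: "P = {x, tneg p x}" "x \<in> M'" "tneg p x \<in> M'"
      by (auto simp: orbits_def)
    have "x \<in> M \<longleftrightarrow> tneg p x \<in> M"
      using sym[of x] sym[of "tneg p x"] tneg_tneg[of x p] x(2) sub by auto
    then show "P \<in> orbits p M \<union> orbits p (M' - M)" using x unfolding orbits_def by blast
  qed
  then have "card (orbits p M') \<le> card (orbits p M \<union> orbits p (M' - M))"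
    using sub by (intro card_mono finite_UnI finite_orbits) auto
  also have "\<dots> \<le> card (orbits p M) + card (orbits p (M' - M))" by (rule card_Un_le)
  finally show ?thesis .
qed

text \<open>Every orbit in S is represented by a point of S in H.\<close>
lemma card_orbits_le_half:
  assumes "S \<subseteq> torus p" "(0, 0) \<notin> S"
  shows "card (orbits p S) \<le> card {x \<in> S. half p x}"
proof -
  have fin: "finite {x \<in> S. half p x}"
    using assms(1) finite_torus by (blast intro: finite_subset)
  have "orbits p S \<subseteq> (\<lambda>x. {x, tneg p x}) ` {x \<in> S. half p x}"
  proof
    fix P assume "P \<in> orbits p S"
    then obtain x where x: "P = {x, tneg p x}" "x \<in> S" "tneg p x \<in> S"
      by (auto simp: orbits_def)
    have "P = {tneg p x, tneg p (tneg p x)}" using x assms(1) tneg_tneg[of x p] by auto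
    then show "P \<in> (\<lambda>x. {x, tneg p x}) ` {x \<in> S. half p x}"
      using half_covers[of x p] x assms by auto
  qed
  then have "card (orbits p S) \<le> card ((\<lambda>x. {x, tneg p x}) ` {x \<in> S. half p x})"
    using fin by (intro card_mono) auto
  also have "\<dots> \<le> card {x \<in> S. half p x}" using fin by (rule card_image_le)
  finally show ?thesis .
qed

text \<open>A set T of points of H on one sphere of squared norm at least 2, all of whose smaller
  nonzero points lie in the invariant set M, has no more points than M has orbits: x maps
  to the orbit of its descent, injectively because H meets each orbit at most once.\<close>
lemma card_sphere_le_orbits_below:
  assumes p: "2 \<le> p" and M: "M \<subseteq> torus p" "\<And>x. x \<in> M \<Longrightarrow> tneg p x \<in> M"
    and T: "T \<subseteq> torus p" "\<And>x. x \<in> T \<Longrightarrow> half p x" "\<And>x. x \<in> T \<Longrightarrow> 2 \<le> sqnorm p x"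
    and sphere: "\<And>x y. x \<in> T \<Longrightarrow> y \<in> T \<Longrightarrow> sqnorm p x = sqnorm p y"
    and below: "\<And>x y. x \<in> T \<Longrightarrow> y \<in> torus p \<Longrightarrow> y \<noteq> (0, 0) \<Longrightarrow>
      sqnorm p y < sqnorm p x \<Longrightarrow> y \<in> M"
  shows "card T \<le> card (orbits p M)"
proof -
  define g where "g x = {descend p x, tneg p (descend p x)}" for x
  have desc: "descend p x \<in> M \<and> descend p x \<in> torus p \<and> half p (descend p x)" if "x \<in> T" for x
    using descend_props[OF p] below[OF that] that T by blast
  have "g ` T \<subseteq> orbits p M" using desc M(2) unfolding g_def orbits_def by blast
  moreover have "inj_on g T"
  proof (rule inj_onI)
    fix x y assume xy: "x \<in> T" "y \<in> T" "g x = g y"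
    have "descend p x = descend p y \<or> descend p x = tneg p (descend p y)"
      using xy(3) by (simp add: g_def doubleton_eq_iff) blast
    then have "descend p x = descend p y"
      using half_unique[of "descend p y" p] desc[OF xy(1)] desc[OF xy(2)] by auto
    then show "x = y" using descend_inj_on_sphere[OF p] xy T sphere by blast
  qed
  ultimately show ?thesis using card_inj_on_le finite_orbits[OF M(1)] by blast
qed

lemma consecutive_dim_bound:
  assumes p: "2 \<le> p" and M: "M \<in> M1 p" and M': "M' \<in> M1 p" and sub: "M \<subset> M'"
    and between: "\<And>C. C \<in> M1 p \<Longrightarrow> \<not> (M \<subset> C \<and> C \<subset> M')" and nonempty: "M \<noteq> {}"
  shows "dm p M' \<le> 2 * dm p M"
proof -
  define S where "S = M' - M"
  have S_torus: "S \<subseteq> torus p" and S_nonzero: "(0, 0) \<notin> S"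
    using M1_subset_torus[OF M'] M1_nonzero[OF M'] by (auto simp: S_def)
  have below: "y \<in> M" if "x \<in> S" "y \<in> torus p" "y \<noteq> (0, 0)" "sqnorm p y < sqnorm p x" for x y
    using shell_below[OF M M' between] that by (auto simp: S_def)
  have sphere: "sqnorm p x = sqnorm p y" if "x \<in> S" "y \<in> S" for x y
  proof (rule ccontr)
    assume "sqnorm p x \<noteq> sqnorm p y"
    moreover have "x \<in> torus p" "y \<in> torus p" "x \<noteq> (0, 0)" "y \<noteq> (0, 0)"
      using that S_torus S_nonzero by auto
    ultimately have "x \<in> M \<or> y \<in> M"
      using below[of x y] below[of y x] that by (cases "sqnorm p x < sqnorm p y") auto
    then show False using that by (simp add: S_def)
  qed
  have far: "2 \<le> sqnorm p x" if x: "x \<in> S" for x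
  proof -
    obtain z where z: "z \<in> M" using nonempty by blast
    have "1 \<le> sqnorm p z" using z M1_subset_torus[OF M] M1_nonzero[OF M] sqnorm_pos by blast
    moreover have "\<not> sqnorm p x \<le> sqnorm p z"
    proof
      assume "sqnorm p x \<le> sqnorm p z"
      then have "x \<in> M" using M1_down_closed[OF M z] x S_torus S_nonzero by blast
      then show False using x by (simp add: S_def)
    qed
    ultimately show ?thesis by linarith
  qed
  have "dm p M' \<le> dm p M + card (orbits p S)"
    unfolding dm_orbits S_def
    using sub M1_subset_torus[OF M'] M1_symmetric[OF M] by (intro card_orbits_split) auto
  also have "card (orbits p S) \<le> card {x \<in> S. half p x}"
    using S_torus S_nonzero by (rule card_orbits_le_half)
  also have "\<dots> \<le> dm p M"
    unfolding dm_orbits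
  proof (rule card_sphere_le_orbits_below[OF p M1_subset_torus[OF M] M1_symmetric[OF M]])
    show "{x \<in> S. half p x} \<subseteq> torus p" using S_torus by auto
  qed (use sphere far below in \<open>blast+\<close>)
  finally show ?thesis by simp
qed

text \<open>The theorem: m_i and m_(i+1) are consecutive in the chain M_1, and m_i is nonempty
  since i >= 1.\<close>
theorem mainTheorem20:
  fixes p i :: nat
  assumes "p \<ge> 2" and "1 \<le> i" and "i \<le> NM p - 1"
  shows "dm p (mi p (i + 1)) \<le> 2 * dm p (mi p i)"
proof -
  have chain: "finite (M1 p)" "\<And>A B. A \<in> M1 p \<Longrightarrow> B \<in> M1 p \<Longrightarrow> A \<subseteq> B \<or> B \<subseteq> A"
    using M1_finite M1_chain by auto
  have mi: "mi p j = chain_elem (M1 p) j" for j by (simp add: mi_def chain_elem_def rank_def)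
  have i: "i + 1 < card (M1 p)" using assms(2,3) by (simp add: NM_def)
  show ?thesis
    unfolding mi
    using consecutive_dim_bound[OF assms(1) chain_elem(1)[OF chain] chain_elem(1)[OF chain]
        chain_elem_consecutive[OF chain i] chain_elem_nonempty[OF chain]] i assms(2)
    by simp
qed

end
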